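(* Let $H$ be a complex Hilbert space and let $R \in \mathcal{L}(H)$ be an operator of finite rank. Then $I + R$ satisfies the property $\mathcal{AN}^*$.
   Context: $\mathcal{L}(H)$ is the space of bounded linear operators on $H$; $I$ is the identity. For a closed subspace $M \neq \{0\}$ of $H$ and $T \in \mathcal{L}(H)$, write $[T|_M] := \inf\{\|Tx\| : x \in M, \|x\|=1\}$; $T|_M$ satisfies $\mathcal{N}^*$ if there is $x_0 \in M$ with $\|x_0\|=1$ and $\|Tx_0\| = [T|_M]$. $T$ satisfies the property $\mathcal{AN}^*$ if $T|_M$ satisfies $\mathcal{N}^*$ for every closed subspace $M \neq \{0\}$ of $H$. *)

theory Defs
  imports "HOL-Analysis.Analysis"
begin

class complex_vector = real_vector +
  fixes scaleC :: "complex \<Rightarrow> 'a \<Rightarrow> 'a" (infixr \<open>*\<^sub>C\<close> 75)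
  assumes scaleC_add_right: "a *\<^sub>C (x + y) = a *\<^sub>C x + a *\<^sub>C y"
    and scaleC_add_left: "(a + b) *\<^sub>C x = a *\<^sub>C x + b *\<^sub>C x"
    and scaleC_scaleC: "a *\<^sub>C (b *\<^sub>C x) = (a * b) *\<^sub>C x"
    and scaleC_one: "1 *\<^sub>C x = x"
    and scaleR_scaleC: "r *\<^sub>R x = complex_of_real r *\<^sub>C x"

class complex_inner = complex_vector + real_normed_vector +
  fixes cinner :: "'a \<Rightarrow> 'a \<Rightarrow> complex"
  assumes cinner_commute: "cinner x y = cnj (cinner y x)"
    and cinner_add_left: "cinner (x + y) z = cinner x z + cinner y z"
    and cinner_scaleC_left: "cinner (a *\<^sub>C x) y = cnj a * cinner x y"
    and cinner_pos: "Im (cinner x x) = 0 \<and> 0 \<le> Re (cinner x x)"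
    and cinner_eq_zero_iff: "cinner x x = 0 \<longleftrightarrow> x = 0"
    and norm_eq_sqrt_cinner: "norm x = sqrt (Re (cinner x x))"

class chilbert_space = complex_inner + complete_space

definition clinear :: "('a::complex_vector \<Rightarrow> 'b::complex_vector) \<Rightarrow> bool" where
  "clinear T \<longleftrightarrow> (\<forall>x y. T (x + y) = T x + T y) \<and> (\<forall>c x. T (c *\<^sub>C x) = c *\<^sub>C T x)"

definition bounded_clinear :: "('a::complex_inner \<Rightarrow> 'b::complex_inner) \<Rightarrow> bool" where
  "bounded_clinear T \<longleftrightarrow> clinear T \<and> (\<exists>K. \<forall>x. norm (T x) \<le> norm x * K)"

definition cspan :: "'a::complex_vector set \<Rightarrow> 'a set" where
  "cspan S = {(\<Sum>x\<in>F. c x *\<^sub>C x) | F c. finite F \<and> F \<subseteq> S}"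

definition finite_rank :: "('a::complex_vector \<Rightarrow> 'b::complex_vector) \<Rightarrow> bool" where
  "finite_rank T \<longleftrightarrow> (\<exists>F. finite F \<and> range T \<subseteq> cspan F)"

definition csubspace :: "'a::complex_vector set \<Rightarrow> bool" where
  "csubspace M \<longleftrightarrow> 0 \<in> M \<and> (\<forall>x\<in>M. \<forall>y\<in>M. x + y \<in> M) \<and> (\<forall>c. \<forall>x\<in>M. c *\<^sub>C x \<in> M)"

definition min_mod :: "('a::complex_inner \<Rightarrow> 'a) \<Rightarrow> 'a set \<Rightarrow> real" where
  "min_mod T M = Inf {norm (T x) | x. x \<in> M \<and> norm x = 1}"

definition restr_attains_min :: "('a::complex_inner \<Rightarrow> 'a) \<Rightarrow> 'a set \<Rightarrow> bool" where
  "restr_attains_min T M \<longleftrightarrow> (\<exists>x0\<in>M. norm x0 = 1 \<and> norm (T x0) = min_mod T M)"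

definition AN_star :: "('a::complex_inner \<Rightarrow> 'a) \<Rightarrow> bool" where
  "AN_star T \<longleftrightarrow> (\<forall>M. csubspace M \<and> closed M \<and> M \<noteq> {0} \<longrightarrow> restr_attains_min T M)"

end

theory Submission
  imports Defs
begin

text \<open>Let \<open>range R \<subseteq> span F\<close> with \<open>F\<close> finite, and split the closed subspace \<open>M\<close> orthogonally
as \<open>M\<^sub>0 \<oplus> M\<^sub>1\<close> with \<open>M\<^sub>0 = {x \<in> M. R x = 0, x \<perp> F}\<close>. On \<open>M\<^sub>0\<close> the operator \<open>I + R\<close> is the
identity, and \<open>M\<^sub>0\<close> is orthogonal to \<open>range R\<close>, so \<open>\<parallel>(I + R)(p + q)\<parallel>\<^sup>2 = \<parallel>p\<parallel>\<^sup>2 + \<parallel>(I + R) q\<parallel>\<^sup>2\<close>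
for \<open>p \<in> M\<^sub>0\<close>, \<open>q \<in> M\<^sub>1\<close>. The finite-rank maps \<open>R\<close> and \<open>x \<mapsto> \<Sum>\<^sub>f\<^sub>\<in>\<^sub>F \<langle>f, x\<rangle> f\<close> have no common
nonzero zero in \<open>M\<^sub>1\<close>, so \<open>M\<^sub>1\<close> is finite dimensional and \<open>\<parallel>(I + R) x\<parallel>\<close> attains a minimum \<open>\<mu>\<close>
on its unit sphere. The minimum over the unit sphere of \<open>M\<close> is then \<open>min 1 \<mu>\<close>, attained by a
unit vector of \<open>M\<^sub>0\<close> or by the minimiser in \<open>M\<^sub>1\<close>.\<close>

section \<open>Complex vector spaces\<close>

global_interpretation cvs: vector_space "scaleC :: complex \<Rightarrow> 'a \<Rightarrow> 'a::complex_vector"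
  by unfold_locales (auto simp: scaleC_add_right scaleC_add_left scaleC_scaleC scaleC_one)

lemma cspan_eq_span: "cspan S = cvs.span S"
  unfolding cspan_def cvs.span_explicit by blast

lemma csubspace_iff_subspace: "csubspace M \<longleftrightarrow> cvs.subspace M"
  by (auto simp: csubspace_def cvs.subspace_def)

lemma clinear_imp_module_hom: "clinear L \<Longrightarrow> module_hom (*\<^sub>C) (*\<^sub>C) L"
  unfolding clinear_def
  by (intro module_hom.intro module_hom_axioms.intro cvs.module_axioms) auto

lemma bounded_clinear_imp_bounded_linear: "bounded_clinear R \<Longrightarrow> bounded_linear R"
  unfolding bounded_clinear_def clinear_def
  by (auto intro!: bounded_linear_intro simp: scaleR_scaleC)

lemma csubspace_scaleR: "csubspace N \<Longrightarrow> a \<in> N \<Longrightarrow> r *\<^sub>R a \<in> N"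
  unfolding csubspace_def by (metis scaleR_scaleC)

lemma csubspace_Int: "csubspace A \<Longrightarrow> csubspace B \<Longrightarrow> csubspace (A \<inter> B)"
  unfolding csubspace_def by auto

lemma csubspace_kernel: "clinear L \<Longrightarrow> csubspace {x. L x = 0}"
  unfolding csubspace_iff_subspace by (rule module_hom.subspace_kernel[OF clinear_imp_module_hom])

lemma exists_unit_vector:
  assumes "csubspace N" "N \<noteq> {0}"
  obtains u where "u \<in> N" "norm u = 1"
proof -
  obtain z where "z \<in> N" "z \<noteq> 0"
    using assms unfolding csubspace_def by blast
  then show thesis
    using that[of "(1 / norm z) *\<^sub>R z"] csubspace_scaleR[OF assms(1)] by simp
qed

section \<open>Inner product calculus\<close>

lemma cinner_add_right: "cinner x (y + z) = cinner x y + cinner x z"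
  by (metis cinner_add_left cinner_commute complex_cnj_add)

lemma cinner_scaleC_right: "cinner x (a *\<^sub>C y) = a * cinner x y"
  by (metis cinner_commute cinner_scaleC_left complex_cnj_cnj complex_cnj_mult)

lemma cinner_zero_left [simp]: "cinner 0 x = 0"
  using cinner_add_left[of 0 0 x] by simp

lemma cinner_zero_right [simp]: "cinner x 0 = 0"
  using cinner_add_right[of x 0 0] by simp

lemma cinner_minus_right: "cinner x (- y) = - cinner x y"
  using cinner_add_right[of x "- y" y] by (simp add: eq_neg_iff_add_eq_0)

lemma cinner_diff_right: "cinner x (y - z) = cinner x y - cinner x z"
  by (simp only: diff_conv_add_uminus cinner_add_right cinner_minus_right)

lemma cinner_sum_right: "cinner x (\<Sum>i\<in>A. f i) = (\<Sum>i\<in>A. cinner x (f i))"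
  by (induct A rule: infinite_finite_induct) (auto simp: cinner_add_right)

lemma cinner_self: "cinner x x = complex_of_real ((norm x)\<^sup>2)"
  using cinner_pos[of x] by (simp add: norm_eq_sqrt_cinner complex_eq_iff)

lemma norm_sq_eq_Re_cinner: "(norm x)\<^sup>2 = Re (cinner x x)"
  by (simp add: cinner_self)

lemma norm_add_sq: "(norm (x + y))\<^sup>2 = (norm x)\<^sup>2 + (norm y)\<^sup>2 + 2 * Re (cinner x y)"
proof -
  have "cinner (x + y) (x + y) = cinner x x + cinner y y + (cinner x y + cinner y x)"
    by (simp add: cinner_add_left cinner_add_right)
  moreover have "Re (cinner x y + cinner y x) = 2 * Re (cinner x y)"
    by (subst cinner_commute[of y x]) simp
  ultimately show ?thesis
    by (simp add: norm_sq_eq_Re_cinner)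
qed

lemma pythagoras: "cinner x y = 0 \<Longrightarrow> (norm (x + y))\<^sup>2 = (norm x)\<^sup>2 + (norm y)\<^sup>2"
  by (simp add: norm_add_sq)

lemma parallelogram_law:
  "(norm (a - b))\<^sup>2 + (norm (a + b))\<^sup>2 = 2 * (norm a)\<^sup>2 + 2 * (norm (b::'a::complex_inner))\<^sup>2"
  using norm_add_sq[of a "- b"] norm_add_sq[of a b] by (simp add: cinner_minus_right)

lemma norm_scaleC: "norm (a *\<^sub>C (x::'a::complex_inner)) = cmod a * norm x"
proof -
  have "(norm (a *\<^sub>C x))\<^sup>2 = Re (a * cnj a * cinner x x)"
    using cinner_self[of "a *\<^sub>C x"]
    by (simp add: cinner_scaleC_left cinner_scaleC_right mult.assoc mult.left_commute)
  also have "\<dots> = (cmod a * norm x)\<^sup>2"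
    by (simp add: complex_mult_cnj cmod_power2 cinner_self power_mult_distrib)
  finally show ?thesis
    by (rule power2_eq_imp_eq) auto
qed

lemma norm_diff_projection_sq:
  fixes n w :: "'a::complex_inner"
  assumes "n \<noteq> 0"
  shows "(norm (w - (cinner n w / cinner n n) *\<^sub>C n))\<^sup>2
           = (norm w)\<^sup>2 - (cmod (cinner n w))\<^sup>2 / (norm n)\<^sup>2"
proof -
  define t where "t = cinner n w / cinner n n"
  have nn: "cinner n n = complex_of_real ((norm n)\<^sup>2)"
    by (rule cinner_self)
  have "w - t *\<^sub>C n = w + (- t) *\<^sub>C n"
    by simp
  then have "(norm (w - t *\<^sub>C n))\<^sup>2
      = (norm w)\<^sup>2 + (norm ((- t) *\<^sub>C n))\<^sup>2 + 2 * Re (cinner w ((- t) *\<^sub>C n))"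
    by (simp only: norm_add_sq)
  moreover have "cmod t = cmod (cinner n w) / (norm n)\<^sup>2"
    by (simp add: t_def nn norm_divide norm_power)
  then have "(norm ((- t) *\<^sub>C n))\<^sup>2 = (cmod (cinner n w))\<^sup>2 / (norm n)\<^sup>2"
    using assms by (simp add: norm_scaleC power_mult_distrib power_divide power2_eq_square)
  moreover have "cinner w ((- t) *\<^sub>C n) = - (t * cnj (cinner n w))"
    by (simp add: cinner_minus_right cinner_scaleC_right cinner_commute[of w n])
  moreover have "Re (t * cnj (cinner n w)) = (cmod (cinner n w))\<^sup>2 / (norm n)\<^sup>2"
  proof -
    have "t * cnj (cinner n w) = (cinner n w * cnj (cinner n w)) / complex_of_real ((norm n)\<^sup>2)"
      by (simp add: t_def nn)
    then show ?thesis
      by (simp only: Re_divide_of_real complex_mult_cnj cmod_power2 Re_complex_of_real)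
  qed
  ultimately show ?thesis
    by (simp add: t_def)
qed

lemma cauchy_schwarz: "cmod (cinner x y) \<le> norm x * norm (y::'a::complex_inner)"
proof (cases "x = 0")
  case False
  have "0 \<le> (norm (y - (cinner x y / cinner x x) *\<^sub>C x))\<^sup>2"
    by simp
  then have "(cmod (cinner x y))\<^sup>2 \<le> (norm x * norm y)\<^sup>2"
    using False norm_diff_projection_sq[OF False, of y]
    by (simp add: pos_divide_le_eq power_mult_distrib mult.commute)
  then show ?thesis
    by (rule power2_le_imp_le) simp
qed simp

lemma bounded_linear_cinner_right: "bounded_linear (\<lambda>x. cinner a (x::'a::complex_inner))"
proof (rule bounded_linear_intro[where K = "norm a"])
  show "cinner a (r *\<^sub>R x) = r *\<^sub>R cinner a x" for r x
    by (simp add: scaleR_scaleC cinner_scaleC_right scaleR_conv_of_real)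
  show "norm (cinner a x) \<le> norm x * norm a" for x
    using cauchy_schwarz[of a x] by (simp add: mult.commute)
qed (rule cinner_add_right)

lemma bounded_linear_scaleC_left: "bounded_linear (\<lambda>c. c *\<^sub>C (e::'a::complex_inner))"
proof (rule bounded_linear_intro[where K = "norm e"])
  show "(r *\<^sub>R c) *\<^sub>C e = r *\<^sub>R (c *\<^sub>C e)" for r c
    by (simp add: scaleR_scaleC scaleR_conv_of_real)
qed (simp_all add: scaleC_add_left norm_scaleC)

section \<open>Orthogonal complements and projections\<close>

definition orthogonal_complement :: "'a::complex_inner set \<Rightarrow> 'a set" where
  "orthogonal_complement A = {x. \<forall>a\<in>A. cinner a x = 0}"

lemma csubspace_orthogonal_complement: "csubspace (orthogonal_complement A)"
  unfolding csubspace_def orthogonal_complement_def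
  by (auto simp: cinner_add_right cinner_scaleC_right)

lemma closed_orthogonal_complement: "closed (orthogonal_complement (A::'a::complex_inner set))"
proof -
  have "closed {x::'a. cinner a x = 0}" for a
    using closed_Collect_eq[OF bounded_linear_cinner_right[THEN linear_continuous_on]
        continuous_on_const] .
  moreover have "orthogonal_complement A = (\<Inter>a\<in>A. {x. cinner a x = 0})"
    by (auto simp: orthogonal_complement_def)
  ultimately show ?thesis
    by (metis closed_INT)
qed

lemma orthogonal_complement_span:
  "orthogonal_complement (cvs.span A) = orthogonal_complement A"
proof
  show "orthogonal_complement (cvs.span A) \<subseteq> orthogonal_complement A"
    using cvs.span_superset by (auto simp: orthogonal_complement_def)
  show "orthogonal_complement A \<subseteq> orthogonal_complement (cvs.span A)"
  proof
    fix x assume x: "x \<in> orthogonal_complement A"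
    have "cvs.subspace {a. cinner a x = 0}"
      unfolding cvs.subspace_def by (auto simp: cinner_add_left cinner_scaleC_left)
    then have "cvs.span A \<subseteq> {a. cinner a x = 0}"
      using x by (intro cvs.span_minimal) (auto simp: orthogonal_complement_def)
    then show "x \<in> orthogonal_complement (cvs.span A)"
      by (auto simp: orthogonal_complement_def)
  qed
qed

lemma Cauchy_minimizing_sequence:
  fixes s :: "nat \<Rightarrow> 'a::complex_inner"
  assumes N: "csubspace N" "\<And>k. s k \<in> N"
    and d: "\<And>n. n \<in> N \<Longrightarrow> d \<le> (norm (x - n))\<^sup>2"
    and s: "\<And>k. (norm (x - s k))\<^sup>2 < d + inverse (real (Suc k))"
  shows "Cauchy s"
proof (rule metric_CauchyI)
  have close: "(norm (s j - s k))\<^sup>2 \<le> 2 * inverse (real (Suc j)) + 2 * inverse (real (Suc k))" for j k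
  proof -
    \<comment> \<open>the midpoint of \<open>s j\<close> and \<open>s k\<close> lies in \<open>N\<close>, hence is at squared distance \<open>\<ge> d\<close> from \<open>x\<close>\<close>
    define m where "m = (1/2) *\<^sub>R (s k + s j)"
    have "m \<in> N"
      unfolding m_def by (rule csubspace_scaleR[OF N(1)]) (use N in \<open>simp add: csubspace_def\<close>)
    then have "4 * d \<le> (norm (2 *\<^sub>R (x - m)))\<^sup>2"
      using d[of m] by (simp add: power_mult_distrib)
    moreover have "2 *\<^sub>R (x - m) = (x - s k) + (x - s j)"
      unfolding m_def by (simp add: algebra_simps scaleR_2)
    ultimately show ?thesis
      using parallelogram_law[of "x - s k" "x - s j"] s[of j] s[of k] by simp
  qed
  fix e :: real
  assume "e > 0"
  then obtain K where K: "inverse (real (Suc K)) < e\<^sup>2 / 4"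
    using reals_Archimedean[of "e\<^sup>2 / 4"] by auto
  have "dist (s m) (s n) < e" if "m \<ge> K" "n \<ge> K" for m n
  proof -
    have "inverse (real (Suc m)) \<le> inverse (real (Suc K))" "inverse (real (Suc n)) \<le> inverse (real (Suc K))"
      using that by (simp_all add: le_imp_inverse_le)
    then have "(norm (s m - s n))\<^sup>2 < e\<^sup>2"
      using close[of m n] K by linarith
    then show ?thesis
      using \<open>e > 0\<close> by (simp add: dist_norm power2_less_imp_less)
  qed
  then show "\<exists>K. \<forall>m\<ge>K. \<forall>n\<ge>K. dist (s m) (s n) < e"
    by blast
qed

lemma exists_nearest_point:
  fixes N :: "'a::chilbert_space set"
  assumes "csubspace N" "closed N"
  obtains p where "p \<in> N" "\<And>n. n \<in> N \<Longrightarrow> norm (x - p) \<le> norm (x - n)"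
proof -
  define D where "D = {(norm (x - n))\<^sup>2 | n. n \<in> N}"
  define d where "d = Inf D"
  have "D \<noteq> {}"
    using assms(1) by (auto simp: D_def csubspace_def)
  have d_le: "d \<le> (norm (x - n))\<^sup>2" if "n \<in> N" for n
    unfolding d_def D_def using that by (intro cInf_lower bdd_belowI[where m = 0]) auto
  have "\<exists>n\<in>N. (norm (x - n))\<^sup>2 < d + inverse (real (Suc k))" for k
    using cInf_lessD[OF \<open>D \<noteq> {}\<close>, of "d + inverse (real (Suc k))"] by (auto simp: d_def D_def)
  then obtain s where sN: "\<And>k. s k \<in> N"
    and s: "\<And>k. (norm (x - s k))\<^sup>2 < d + inverse (real (Suc k))"
    by metis
  have "Cauchy s"
    using assms(1) sN d_le s by (rule Cauchy_minimizing_sequence)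
  then obtain p where lim: "s \<longlonglongrightarrow> p"
    using Cauchy_convergent_iff convergent_def by blast
  have "p \<in> N"
    using closed_sequentially[OF assms(2) sN lim] .
  moreover have "(norm (x - p))\<^sup>2 \<le> d"
  proof (rule LIMSEQ_le)
    show "(\<lambda>k. (norm (x - s k))\<^sup>2) \<longlonglongrightarrow> (norm (x - p))\<^sup>2"
      by (intro tendsto_intros lim)
    show "(\<lambda>k. d + inverse (real (Suc k))) \<longlonglongrightarrow> d"
      using tendsto_add[OF tendsto_const LIMSEQ_inverse_real_of_nat, of d] by simp
    show "\<exists>K. \<forall>k\<ge>K. (norm (x - s k))\<^sup>2 \<le> d + inverse (real (Suc k))"
      using s less_imp_le by blast
  qed
  ultimately show thesis
    using that d_le by (meson order.trans power2_le_imp_le norm_ge_zero)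
qed

lemma nearest_point_orthogonal:
  assumes N: "csubspace N" "p \<in> N"
    and nearest: "\<And>n. n \<in> N \<Longrightarrow> norm (x - p) \<le> norm (x - n)"
  shows "x - p \<in> orthogonal_complement N"
  unfolding orthogonal_complement_def
proof (intro CollectI ballI)
  fix n assume "n \<in> N"
  show "cinner n (x - p) = 0"
  proof (cases "n = 0")
    case False
    define t where "t = cinner n (x - p) / cinner n n"
    have "p + t *\<^sub>C n \<in> N"
      using N \<open>n \<in> N\<close> by (simp add: csubspace_def)
    then have "(norm (x - p))\<^sup>2 \<le> (norm ((x - p) - t *\<^sub>C n))\<^sup>2"
      using nearest by (simp add: diff_diff_eq)
    then have "(cmod (cinner n (x - p)))\<^sup>2 / (norm n)\<^sup>2 \<le> 0"
      unfolding t_def norm_diff_projection_sq[OF False] by simp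
    then show ?thesis
      using False by (simp add: divide_le_0_iff)
  qed simp
qed

lemma orthogonal_projection_exists:
  fixes N :: "'a::chilbert_space set"
  assumes "csubspace N" "closed N"
  obtains p where "p \<in> N" "x - p \<in> orthogonal_complement N"
  using exists_nearest_point[OF assms] nearest_point_orthogonal[OF assms(1)] by metis

section \<open>Finite-dimensional subspaces\<close>

definition orthonormal :: "'a::complex_inner set \<Rightarrow> bool" where
  "orthonormal E \<longleftrightarrow> (\<forall>e\<in>E. cinner e e = 1) \<and> (\<forall>e\<in>E. \<forall>f\<in>E. e \<noteq> f \<longrightarrow> cinner e f = 0)"

lemma orthonormal_coefficient:
  assumes "orthonormal E" "finite E" "e \<in> E"
  shows "cinner e (\<Sum>f\<in>E. c f *\<^sub>C f) = c e"
proof -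
  have "cinner e (\<Sum>f\<in>E. c f *\<^sub>C f) = (\<Sum>f\<in>E. c f * cinner e f)"
    by (simp add: cinner_sum_right cinner_scaleC_right)
  also have "\<dots> = (\<Sum>f\<in>E. if f = e then c e else 0)"
    by (rule sum.cong) (use assms in \<open>auto simp: orthonormal_def\<close>)
  finally show ?thesis
    using assms by simp
qed

lemma orthonormal_expansion:
  assumes "orthonormal E" "finite E" "y \<in> cvs.span E"
  shows "y = (\<Sum>e\<in>E. cinner e y *\<^sub>C e)"
proof -
  obtain c where y: "y = (\<Sum>f\<in>E. c f *\<^sub>C f)"
    using assms(3) cvs.span_finite[OF assms(2)] by auto
  show ?thesis
    unfolding y by (rule sum.cong) (simp_all add: orthonormal_coefficient[OF assms(1,2)])
qed

lemma orthonormal_extend: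
  assumes E: "finite E" "orthonormal E"
  obtains E' where "finite E'" "orthonormal E'" "cvs.span E \<subseteq> cvs.span E'" "b \<in> cvs.span E'"
proof -
  define w where "w = b - (\<Sum>e\<in>E. cinner e b *\<^sub>C e)"
  have w_orth: "cinner e w = 0" if "e \<in> E" for e
    using orthonormal_coefficient[OF E(2,1) that, of "\<lambda>e. cinner e b"]
    by (simp add: w_def cinner_diff_right)
  have b_eq: "b = w + (\<Sum>e\<in>E. cinner e b *\<^sub>C e)"
    by (simp add: w_def)
  have sum_span: "(\<Sum>e\<in>E. cinner e b *\<^sub>C e) \<in> cvs.span E"
    by (intro cvs.span_sum cvs.span_scale cvs.span_base)
  show thesis
  proof (cases "w = 0")
    case True
    then show ?thesis
      using that[of E] E b_eq sum_span by auto
  next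
    case False
    define u where "u = complex_of_real (1 / norm w) *\<^sub>C w"
    have "cinner u u = 1"
      using False cinner_self[of w]
      by (simp add: u_def cinner_scaleC_left cinner_scaleC_right power2_eq_square)
    moreover have "cinner e u = 0" "cinner u e = 0" if "e \<in> E" for e
      using w_orth[OF that] cinner_commute[of u e]
      by (simp_all add: u_def cinner_scaleC_right)
    ultimately have "orthonormal (insert u E)"
      using E(2) unfolding orthonormal_def by force
    have span_mono: "cvs.span E \<subseteq> cvs.span (insert u E)"
      by (rule cvs.span_mono) blast
    have "w = complex_of_real (norm w) *\<^sub>C u"
      using False by (simp add: u_def)
    then have "w \<in> cvs.span (insert u E)"
      by (metis cvs.span_base cvs.span_scale insertI1)
    then have "b \<in> cvs.span (insert u E)"
      using b_eq sum_span span_mono cvs.span_add by (metis subsetD)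
    then show ?thesis
      using that E(1) span_mono \<open>orthonormal (insert u E)\<close> by blast
  qed
qed

lemma gram_schmidt:
  fixes B :: "'a::complex_inner set"
  assumes "finite B"
  obtains E where "finite E" "orthonormal E" "B \<subseteq> cvs.span E"
proof -
  have "\<exists>E. finite E \<and> orthonormal E \<and> B \<subseteq> cvs.span E"
    using assms
  proof (induction B rule: finite_induct)
    case empty
    then show ?case
      by (intro exI[of _ "{}"]) (auto simp: orthonormal_def)
  next
    case (insert b B)
    then obtain E where "finite E" "orthonormal E" "B \<subseteq> cvs.span E"
      by blast
    then show ?case
      using orthonormal_extend[of E b] by (metis insert_subset subset_trans)
  qed
  then show thesis
    using that by blast
qed

lemma subseq_convergent_coordinates:
  fixes y :: "nat \<Rightarrow> 'a::complex_inner"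
  assumes "finite E" and bounded: "\<And>n. norm (y n) \<le> C"
  shows "\<exists>r. strict_mono r \<and> (\<forall>e\<in>E. convergent (\<lambda>n. cinner e (y (r n))))"
  using assms(1)
proof (induction E rule: finite_induct)
  case empty
  then show ?case
    by (intro exI[of _ id]) (auto simp: strict_mono_def)
next
  case (insert a E)
  then obtain r where r: "strict_mono r" "\<forall>e\<in>E. convergent (\<lambda>n. cinner e (y (r n)))"
    by blast
  have "norm (cinner a (y (r n))) \<le> norm a * C" for n
    using order_trans[OF cauchy_schwarz mult_left_mono[OF bounded norm_ge_zero]] .
  then have "bounded (range (\<lambda>n. cinner a (y (r n))))"
    unfolding bounded_iff by blast
  then obtain l s where s: "strict_mono s" "((\<lambda>n. cinner a (y (r n))) \<circ> s) \<longlonglongrightarrow> l"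
    using bounded_imp_convergent_subsequence by blast
  have "convergent (\<lambda>n. cinner e (y (r (s n))))" if e: "e \<in> insert a E" for e
  proof (cases "e = a")
    case False
    then obtain L where "(\<lambda>n. cinner e (y (r n))) \<longlonglongrightarrow> L"
      using r(2) e by (auto simp: convergent_def)
    from LIMSEQ_subseq_LIMSEQ[OF this s(1)] show ?thesis
      by (auto simp: convergent_def o_def)
  qed (use s(2) in \<open>auto simp: convergent_def o_def\<close>)
  then show ?case
    using strict_mono_o[OF r(1) s(1)] by (intro exI[of _ "r \<circ> s"]) (auto simp: o_def)
qed

lemma compact_in_finite_span:
  fixes V :: "'a::chilbert_space set"
  assumes "finite B" "V \<subseteq> cvs.span B" "closed V" "bounded V"
  shows "compact V"
  unfolding compact_eq_seq_compact_metric seq_compact_def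
proof (intro allI impI)
  fix y :: "nat \<Rightarrow> 'a"
  assume yV: "\<forall>n. y n \<in> V"
  obtain E where E: "finite E" "orthonormal E" "B \<subseteq> cvs.span E"
    using gram_schmidt[OF assms(1)] .
  have V_span: "V \<subseteq> cvs.span E"
    using assms(2) cvs.span_minimal[OF E(3) cvs.subspace_span] by blast
  obtain C where "\<And>n. norm (y n) \<le> C"
    using assms(4) yV unfolding bounded_iff by blast
  then obtain r where r: "strict_mono r" "\<forall>e\<in>E. convergent (\<lambda>n. cinner e (y (r n)))"
    using subseq_convergent_coordinates[OF E(1)] by blast
  define l where "l = (\<Sum>e\<in>E. lim (\<lambda>n. cinner e (y (r n))) *\<^sub>C e)"
  have "(\<lambda>n. \<Sum>e\<in>E. cinner e (y (r n)) *\<^sub>C e) \<longlonglongrightarrow> l"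
    unfolding l_def
    using r(2) by (intro tendsto_sum bounded_linear.tendsto[OF bounded_linear_scaleC_left])
      (simp add: convergent_LIMSEQ_iff)
  moreover have "(\<lambda>n. \<Sum>e\<in>E. cinner e (y (r n)) *\<^sub>C e) = y \<circ> r"
  proof
    fix n
    have "y (r n) \<in> cvs.span E"
      using yV V_span by blast
    then show "(\<Sum>e\<in>E. cinner e (y (r n)) *\<^sub>C e) = (y \<circ> r) n"
      unfolding o_def by (rule orthonormal_expansion[OF E(2,1), symmetric])
  qed
  ultimately have "(y \<circ> r) \<longlonglongrightarrow> l"
    by simp
  moreover have "l \<in> V"
    using closed_sequentially[OF assms(3) _ \<open>(y \<circ> r) \<longlonglongrightarrow> l\<close>] yV by auto
  ultimately show "\<exists>l\<in>V. \<exists>r. strict_mono r \<and> (y \<circ> r) \<longlonglongrightarrow> l"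
    using r(1) by blast
qed

text \<open>Lift a basis of the image back to \<open>W\<close> and add a spanning set of the kernel.\<close>

lemma finite_span_if_finite_span_image_and_kernel:
  fixes L :: "'a::complex_vector \<Rightarrow> 'b::complex_vector"
  assumes W: "cvs.subspace W" and L: "clinear L"
    and image: "finite G" "L ` W \<subseteq> cvs.span G"
    and kernel: "finite K" "{x \<in> W. L x = 0} \<subseteq> cvs.span K"
  obtains B where "finite B" "W \<subseteq> cvs.span B"
proof -
  have hom: "module_hom (*\<^sub>C) (*\<^sub>C) L"
    using L by (rule clinear_imp_module_hom)
  obtain D where D: "D \<subseteq> L ` W" "cvs.independent D" "L ` W \<subseteq> cvs.span D"
    using cvs.maximal_independent_subset by blast
  have "finite D"
    using cvs.independent_span_bound[OF image(1) D(2)] D(1) image(2) by blast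
  then obtain C where C: "C \<subseteq> W" "finite C" "D = L ` C"
    using finite_subset_image[OF _ D(1)] by blast
  have "W \<subseteq> cvs.span (K \<union> C)"
  proof
    fix w assume "w \<in> W"
    then have "L w \<in> L ` cvs.span C"
      using D(3) C(3) module_hom.span_image[OF hom] by auto
    then obtain v where v: "v \<in> cvs.span C" "L v = L w"
      by auto
    have "v \<in> W"
      using v(1) cvs.span_minimal[OF C(1) W] by blast
    then have "w - v \<in> cvs.span K"
      using \<open>w \<in> W\<close> v(2) W kernel(2) module_hom.diff[OF hom] cvs.subspace_diff by fastforce
    then show "w \<in> cvs.span (K \<union> C)"
      using v(1) cvs.span_add cvs.span_mono[of K "K \<union> C"] cvs.span_mono[of C "K \<union> C"]
      by (metis (no_types, lifting) diff_add_cancel subsetD sup_ge1 sup_ge2)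
  qed
  then show thesis
    using that C(2) kernel(1) by blast
qed

lemma coordinate_sum_eq_0_iff:
  assumes "finite F"
  shows "(\<Sum>f\<in>F. cinner f x *\<^sub>C f) = 0 \<longleftrightarrow> x \<in> orthogonal_complement F"
proof
  assume "(\<Sum>f\<in>F. cinner f x *\<^sub>C f) = 0"
  then have "(\<Sum>f\<in>F. cinner f x * cnj (cinner f x)) = 0"
    using cinner_sum_right[of x "\<lambda>f. cinner f x *\<^sub>C f" F]
    by (simp add: cinner_scaleC_right cinner_commute[of x])
  moreover have "cinner f x * cnj (cinner f x) = complex_of_real ((cmod (cinner f x))\<^sup>2)" for f
    by (simp add: complex_mult_cnj cmod_power2)
  ultimately have "complex_of_real (\<Sum>f\<in>F. (cmod (cinner f x))\<^sup>2) = 0"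
    by simp
  then have "(\<Sum>f\<in>F. (cmod (cinner f x))\<^sup>2) = 0"
    by (simp only: of_real_eq_0_iff)
  then show "x \<in> orthogonal_complement F"
    using assms by (simp add: sum_nonneg_eq_0_iff orthogonal_complement_def)
qed (simp add: orthogonal_complement_def)

lemma finite_span_orthogonal_to_common_kernel:
  assumes M: "csubspace M" and R: "clinear R" "finite F" "range R \<subseteq> cvs.span F"
  obtains B where "finite B"
    "M \<inter> orthogonal_complement (M \<inter> {x. R x = 0} \<inter> orthogonal_complement F) \<subseteq> cvs.span B"
proof -
  define M1 where "M1 = M \<inter> orthogonal_complement (M \<inter> {x. R x = 0} \<inter> orthogonal_complement F)"
  define Q where "Q x = (\<Sum>f\<in>F. cinner f x *\<^sub>C f)" for x
  have "csubspace M1" "csubspace (M1 \<inter> {x. R x = 0})"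
    unfolding M1_def
    using M csubspace_orthogonal_complement csubspace_kernel[OF R(1)] by (blast intro: csubspace_Int)+
  then have subspace: "cvs.subspace M1" "cvs.subspace {x \<in> M1. R x = 0}"
    by (simp_all add: csubspace_iff_subspace Collect_conj_eq)
  have "clinear Q"
    unfolding clinear_def Q_def
    by (simp add: cinner_add_right cinner_scaleC_right scaleC_add_left sum.distrib
        cvs.scale_sum_right)
  moreover have "Q x \<in> cvs.span F" for x
    unfolding Q_def by (intro cvs.span_sum cvs.span_scale cvs.span_base)
  then have "Q ` {x \<in> M1. R x = 0} \<subseteq> cvs.span F"
    by blast
  moreover have "{x \<in> {x \<in> M1. R x = 0}. Q x = 0} \<subseteq> cvs.span {}"
    \<comment> \<open>such an \<open>x\<close> lies in \<open>M\<^sub>1\<close> and in its orthogonal complement\<close>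
    using coordinate_sum_eq_0_iff[OF R(2)] cinner_eq_zero_iff
    by (auto simp: M1_def Q_def orthogonal_complement_def)
  ultimately obtain K where "finite K" "{x \<in> M1. R x = 0} \<subseteq> cvs.span K"
    using finite_span_if_finite_span_image_and_kernel[OF subspace(2), of Q F "{}"] R(2) by blast
  then obtain B where "finite B" "M1 \<subseteq> cvs.span B"
    using finite_span_if_finite_span_image_and_kernel[OF subspace(1) R(1,2)] R(3) by blast
  then show thesis
    using that unfolding M1_def by blast
qed

section \<open>Minimum modulus on an orthogonal splitting\<close>

lemma restr_attains_minI:
  assumes "x0 \<in> M" "norm x0 = 1" "\<And>x. x \<in> M \<Longrightarrow> norm x = 1 \<Longrightarrow> norm (T x0) \<le> norm (T x)"
  shows "restr_attains_min T M"
proof -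
  have "min_mod T M = norm (T x0)"
    unfolding min_mod_def by (rule cInf_eq_minimum) (use assms in auto)
  then show ?thesis
    unfolding restr_attains_min_def using assms(1,2) by auto
qed

lemma unit_sphere_bound_scales:
  assumes "csubspace N" "linear T" "\<And>z. z \<in> N \<Longrightarrow> norm z = 1 \<Longrightarrow> c \<le> norm (T z)" "z \<in> N"
  shows "c * norm z \<le> norm (T z)"
proof (cases "z = 0")
  case False
  have "c \<le> norm (T ((1 / norm z) *\<^sub>R z))"
    using assms(3) csubspace_scaleR[OF assms(1,4)] False by simp
  then show ?thesis
    using False by (simp add: linear_scale[OF assms(2)] field_simps)
qed simp

lemma restr_attains_min_at_small_minimiser:
  fixes T :: "'a::complex_inner \<Rightarrow> 'a"
  assumes T: "linear T" and M1: "csubspace M1" "M1 \<subseteq> M"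
    and y: "y \<in> M1" "norm y = 1" "\<And>z. z \<in> M1 \<Longrightarrow> norm z = 1 \<Longrightarrow> norm (T y) \<le> norm (T z)"
    and small: "norm (T y) \<le> 1 \<or> M0 = {0}"
    and split: "\<And>x. x \<in> M \<Longrightarrow> \<exists>p\<in>M0. \<exists>q\<in>M1.
      (norm x)\<^sup>2 = (norm p)\<^sup>2 + (norm q)\<^sup>2 \<and> (norm (T x))\<^sup>2 = (norm p)\<^sup>2 + (norm (T q))\<^sup>2"
  shows "restr_attains_min T M"
proof (rule restr_attains_minI)
  show "y \<in> M" "norm y = 1"
    using y M1(2) by auto
  fix x assume x: "x \<in> M" "norm x = 1"
  obtain p q where pq: "p \<in> M0" "q \<in> M1" "(norm p)\<^sup>2 + (norm q)\<^sup>2 = 1"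
    "(norm (T x))\<^sup>2 = (norm p)\<^sup>2 + (norm (T q))\<^sup>2"
    using split[OF x(1)] x(2) by auto
  have "norm (T y) * norm q \<le> norm (T q)"
    using unit_sphere_bound_scales[OF M1(1) T y(3) pq(2)] .
  then have "(norm (T y) * norm q)\<^sup>2 \<le> (norm (T q))\<^sup>2"
    by (rule power_mono) simp
  moreover have "(norm (T y))\<^sup>2 * (norm p)\<^sup>2 \<le> (norm p)\<^sup>2"
    using small pq(1) by (auto simp: power_le_one mult_left_le_one_le)
  moreover have "(norm (T y))\<^sup>2 = (norm (T y))\<^sup>2 * (norm p)\<^sup>2 + (norm (T y))\<^sup>2 * (norm q)\<^sup>2"
    using pq(3) by (simp add: distrib_left[symmetric])
  ultimately have "(norm (T y))\<^sup>2 \<le> (norm (T x))\<^sup>2"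
    using pq(4) by (simp add: power_mult_distrib)
  then show "norm (T y) \<le> norm (T x)"
    by (rule power2_le_imp_le) simp
qed

lemma restr_attains_min_at_fixed_vector:
  fixes T :: "'a::complex_inner \<Rightarrow> 'a"
  assumes u: "u \<in> M" "norm u = 1" "T u = u"
    and expanding: "\<And>q. q \<in> M1 \<Longrightarrow> norm q \<le> norm (T q)"
    and split: "\<And>x. x \<in> M \<Longrightarrow> \<exists>p\<in>M0. \<exists>q\<in>M1.
      (norm x)\<^sup>2 = (norm p)\<^sup>2 + (norm q)\<^sup>2 \<and> (norm (T x))\<^sup>2 = (norm p)\<^sup>2 + (norm (T q))\<^sup>2"
  shows "restr_attains_min T M"
proof (rule restr_attains_minI)
  show "u \<in> M" "norm u = 1"
    using u by auto
  fix x assume x: "x \<in> M" "norm x = 1"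
  obtain p q where pq: "p \<in> M0" "q \<in> M1" "(norm p)\<^sup>2 + (norm q)\<^sup>2 = 1"
    "(norm (T x))\<^sup>2 = (norm p)\<^sup>2 + (norm (T q))\<^sup>2"
    using split[OF x(1)] x(2) by auto
  have "(norm q)\<^sup>2 \<le> (norm (T q))\<^sup>2"
    using expanding[OF pq(2)] by (simp add: power_mono)
  then have "1 \<le> (norm (T x))\<^sup>2"
    using pq(3,4) by linarith
  then show "norm (T u) \<le> norm (T x)"
    using power2_le_imp_le[of 1 "norm (T x)"] u by simp
qed

lemma restr_attains_min_orthogonal_split:
  fixes T :: "'a::complex_inner \<Rightarrow> 'a"
  assumes T: "linear T" and "M \<noteq> {0}"
    and M0: "csubspace M0" "M0 \<subseteq> M" "\<And>p. p \<in> M0 \<Longrightarrow> T p = p"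
    and M1: "csubspace M1" "M1 \<subseteq> M"
    and min1: "M1 \<noteq> {0} \<Longrightarrow>
      \<exists>y\<in>M1. norm y = 1 \<and> (\<forall>z\<in>M1. norm z = 1 \<longrightarrow> norm (T y) \<le> norm (T z))"
    and split: "\<And>x. x \<in> M \<Longrightarrow> \<exists>p\<in>M0. \<exists>q\<in>M1.
      (norm x)\<^sup>2 = (norm p)\<^sup>2 + (norm q)\<^sup>2 \<and> (norm (T x))\<^sup>2 = (norm p)\<^sup>2 + (norm (T q))\<^sup>2"
  shows "restr_attains_min T M"
proof (cases "\<exists>y\<in>M1. norm y = 1 \<and> (\<forall>z\<in>M1. norm z = 1 \<longrightarrow> norm (T y) \<le> norm (T z))
    \<and> (norm (T y) \<le> 1 \<or> M0 = {0})")
  case True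
  then show ?thesis
    using restr_attains_min_at_small_minimiser[OF T M1 _ _ _ _ split] by blast
next
  case False
  note no_small_minimiser = False
  have expanding: "norm q \<le> norm (T q)" if q: "q \<in> M1" for q
  proof (cases "M1 = {0}")
    case True
    then show ?thesis
      using q linear_0[OF T] by simp
  next
    case False
    then obtain y where y: "y \<in> M1" "norm y = 1" "\<And>z. z \<in> M1 \<Longrightarrow> norm z = 1 \<Longrightarrow> norm (T y) \<le> norm (T z)"
      using min1 by blast
    then have "\<not> (norm (T y) \<le> 1 \<or> M0 = {0})"
      using no_small_minimiser by blast
    then have "norm q \<le> norm (T y) * norm q"
      by (simp add: mult_le_cancel_right1)
    also have "\<dots> \<le> norm (T q)"
      by (rule unit_sphere_bound_scales[OF M1(1) T y(3) q])
    finally show ?thesis .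
  qed
  have "M0 \<noteq> {0}"
  proof
    assume "M0 = {0}"
    obtain x where "x \<in> M" "x \<noteq> 0"
      using \<open>M \<noteq> {0}\<close> M0(1,2) by (auto simp: csubspace_def)
    then obtain q where "q \<in> M1" "q \<noteq> 0"
      using split[of x] \<open>M0 = {0}\<close> by fastforce
    then obtain y where "y \<in> M1" "norm y = 1" "\<forall>z\<in>M1. norm z = 1 \<longrightarrow> norm (T y) \<le> norm (T z)"
      using min1 by blast
    then show False
      using no_small_minimiser \<open>M0 = {0}\<close> by blast
  qed
  then obtain u where "u \<in> M0" "norm u = 1"
    using exists_unit_vector[OF M0(1)] by blast
  then show ?thesis
    using restr_attains_min_at_fixed_vector[OF _ _ _ expanding split] M0(2,3) by blast
qed

lemma unit_sphere_attains_inf: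
  fixes V :: "'a::chilbert_space set"
  assumes "finite B" "V \<subseteq> cvs.span B" "csubspace V" "closed V" "V \<noteq> {0}"
    and f: "continuous_on UNIV f"
  obtains y where "y \<in> V" "norm y = 1" "\<And>z. z \<in> V \<Longrightarrow> norm z = 1 \<Longrightarrow> f y \<le> (f z :: real)"
proof -
  have "closed {z::'a. norm z = 1}"
    using closed_Collect_eq[OF continuous_on_norm_id continuous_on_const] .
  moreover have "bounded {z::'a. norm z = 1}"
    unfolding bounded_iff by auto
  ultimately have "compact (V \<inter> {z. norm z = 1})"
    using assms(1-4) by (intro compact_in_finite_span) auto
  moreover have "V \<inter> {z. norm z = 1} \<noteq> {}"
    using exists_unit_vector[OF assms(3,5)] by auto
  ultimately show thesis
    using continuous_attains_inf[of "V \<inter> {z. norm z = 1}" f] continuous_on_subset[OF f] that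
    by blast
qed

section \<open>Finite-rank perturbations of the identity\<close>

lemma norm_identity_plus_orthogonal_sum:
  assumes "linear R" "R p = 0" "p \<in> orthogonal_complement (range R)" "cinner p q = 0"
  shows "(norm ((p + q) + R (p + q)))\<^sup>2 = (norm p)\<^sup>2 + (norm (q + R q))\<^sup>2"
proof -
  have "(p + q) + R (p + q) = p + (q + R q)"
    using assms(2) linear_add[OF assms(1)] by simp
  moreover have "cinner p (q + R q) = 0"
    using assms(3,4) cinner_commute[of p "R q"] by (simp add: cinner_add_right orthogonal_complement_def)
  ultimately show ?thesis
    by (metis pythagoras)
qed

lemma restr_attains_min_identity_plus_finite_rank:
  fixes R :: "'a::chilbert_space \<Rightarrow> 'a"
  assumes R: "bounded_clinear R" "finite F" "range R \<subseteq> cvs.span F"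
    and M: "csubspace M" "closed M" "M \<noteq> {0}"
  shows "restr_attains_min (\<lambda>x. x + R x) M"
proof -
  define T where "T x = x + R x" for x
  define M0 where "M0 = M \<inter> {x. R x = 0} \<inter> orthogonal_complement F"
  define M1 where "M1 = M \<inter> orthogonal_complement M0"
  have "bounded_linear R" "clinear R"
    using R(1) bounded_clinear_imp_bounded_linear by (auto simp: bounded_clinear_def)
  then have T: "bounded_linear T"
    unfolding T_def by (intro bounded_linear_add bounded_linear_ident)
  have "closed {x. R x = 0}"
    using \<open>bounded_linear R\<close> by (intro closed_Collect_eq) (auto intro: linear_continuous_on)
  then have M0: "csubspace M0" "closed M0"
    unfolding M0_def
    using M csubspace_kernel[OF \<open>clinear R\<close>] csubspace_orthogonal_complement closed_orthogonal_complement
    by (blast intro: csubspace_Int)+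
  have M1: "csubspace M1" "closed M1"
    unfolding M1_def using M csubspace_orthogonal_complement closed_orthogonal_complement
    by (blast intro: csubspace_Int)+
  obtain B where "finite B" "M1 \<subseteq> cvs.span B"
    using finite_span_orthogonal_to_common_kernel[OF M(1) \<open>clinear R\<close> R(2,3)]
    unfolding M1_def M0_def by blast
  have split: "\<exists>p\<in>M0. \<exists>q\<in>M1. (norm x)\<^sup>2 = (norm p)\<^sup>2 + (norm q)\<^sup>2 \<and> (norm (T x))\<^sup>2 = (norm p)\<^sup>2 + (norm (T q))\<^sup>2"
    if "x \<in> M" for x
  proof -
    obtain p where p: "p \<in> M0" "x - p \<in> orthogonal_complement M0"
      using orthogonal_projection_exists[OF M0] .
    then have "x - p \<in> M1" "cinner p (x - p) = 0"
      using that M(1) by (auto simp: M1_def M0_def csubspace_iff_subspace cvs.subspace_diff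
          orthogonal_complement_def)
    moreover have "p \<in> orthogonal_complement (range R)"
      using p(1) R(3) orthogonal_complement_span[of F] by (auto simp: M0_def orthogonal_complement_def)
    ultimately show ?thesis
      using p(1) pythagoras[of p "x - p"] \<open>bounded_linear R\<close>[THEN bounded_linear.linear]
        norm_identity_plus_orthogonal_sum[of R p "x - p"]
      by (auto simp: T_def M0_def)
  qed
  show ?thesis
    unfolding T_def[symmetric]
  proof (rule restr_attains_min_orthogonal_split[OF bounded_linear.linear[OF T] M(3) M0(1) _ _ M1(1)
        _ _ split])
    show "M0 \<subseteq> M" "M1 \<subseteq> M"
      by (auto simp: M0_def M1_def)
    show "T p = p" if "p \<in> M0" for p
      using that by (simp add: T_def M0_def)
    show "\<exists>y\<in>M1. norm y = 1 \<and> (\<forall>z\<in>M1. norm z = 1 \<longrightarrow> norm (T y) \<le> norm (T z))"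
      if "M1 \<noteq> {0}"
      using unit_sphere_attains_inf[OF \<open>finite B\<close> \<open>M1 \<subseteq> cvs.span B\<close> M1 that
          continuous_on_norm[OF linear_continuous_on[OF T]]] by metis
  qed
qed

theorem lemma3p8:
  fixes R :: "'a::chilbert_space \<Rightarrow> 'a"
  assumes "bounded_clinear R"
    and "finite_rank R"
  shows "AN_star (\<lambda>x. x + R x)"
proof -
  obtain F where "finite F" "range R \<subseteq> cvs.span F"
    using assms(2) unfolding finite_rank_def cspan_eq_span by blast
  then show ?thesis
    unfolding AN_star_def
    using restr_attains_min_identity_plus_finite_rank[OF assms(1)] by blast
qed

end
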